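(* The rational group $\mathcal{R}$ is full: every homeomorphism of $\{0,1\}^\omega$ that locally agrees with $\mathcal{R}$ belongs to $\mathcal{R}$.
   Context: An asynchronous binary transducer is $(S,s_0,t,o)$ with $S$ finite, $s_0\in S$, $t\colon S\times\{0,1\}\to S$, $o\colon S\times\{0,1\}\to\{0,1\}^*$. For a state $s$ and sequence $\sigma_1\sigma_2\cdots$ let $s_1=s$, $s_{n+1}=t(s_n,\sigma_n)$, and $o(s,\sigma_1\sigma_2\cdots)=o(s_1,\sigma_1)o(s_2,\sigma_2)\cdots$. A homeomorphism $f$ of $\{0,1\}^\omega$ is rational if some transducer satisfies $f(\psi)=o(s_0,\psi)$ for all $\psi\in\{0,1\}^\omega$; $\mathcal{R}$ is the group of rational homeomorphisms. A homeomorphism $h$ locally agrees with a group $G$ if every point has a neighborhood $U$ and some $g\in G$ with $h|_U=g|_U$. *)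

theory Defs
  imports "HOL-Analysis.Analysis"
begin

definition cantor :: "(nat \<Rightarrow> bool) topology" where
  "cantor = product_topology (\<lambda>_. discrete_topology (UNIV :: bool set)) (UNIV :: nat set)"

text \<open>State sequence: \<open>s_1 = s\<close>, \<open>s_{n+1} = t(s_n, \<sigma>_n)\<close> (indices shifted to start at 0).\<close>
primrec run :: "(nat \<Rightarrow> bool \<Rightarrow> nat) \<Rightarrow> nat \<Rightarrow> (nat \<Rightarrow> bool) \<Rightarrow> nat \<Rightarrow> nat" where
  "run t s \<psi> 0 = s"
| "run t s \<psi> (Suc n) = t (run t s \<psi> n) (\<psi> n)"

definition out_prefix :: "(nat \<Rightarrow> bool \<Rightarrow> nat) \<Rightarrow> (nat \<Rightarrow> bool \<Rightarrow> bool list) \<Rightarrow> nat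
    \<Rightarrow> (nat \<Rightarrow> bool) \<Rightarrow> nat \<Rightarrow> bool list" where
  "out_prefix t out s \<psi> n = concat (map (\<lambda>k. out (run t s \<psi> k) (\<psi> k)) [0..<n])"

text \<open>The (infinite) concatenation \<open>o(s,\<psi>)\<close> equals the infinite word w.\<close>
definition transduces :: "(nat \<Rightarrow> bool \<Rightarrow> nat) \<Rightarrow> (nat \<Rightarrow> bool \<Rightarrow> bool list) \<Rightarrow> nat
    \<Rightarrow> (nat \<Rightarrow> bool) \<Rightarrow> (nat \<Rightarrow> bool) \<Rightarrow> bool" where
  "transduces t out s \<psi> w \<longleftrightarrow>
     (\<forall>n. \<forall>i < length (out_prefix t out s \<psi> n). out_prefix t out s \<psi> n ! i = w i) \<and>
     (\<forall>m. \<exists>n. m \<le> length (out_prefix t out s \<psi> n))"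

text \<open>Rational homeomorphisms; states of a finite transducer are encoded as a finite set of naturals.\<close>
definition rational :: "((nat \<Rightarrow> bool) \<Rightarrow> (nat \<Rightarrow> bool)) \<Rightarrow> bool" where
  "rational f \<longleftrightarrow> homeomorphic_map cantor cantor f \<and>
     (\<exists>S s0 t out. finite S \<and> s0 \<in> S \<and> (\<forall>s\<in>S. \<forall>b. t s b \<in> S) \<and>
        (\<forall>\<psi>. transduces t out s0 \<psi> (f \<psi>)))"

definition rational_group :: "((nat \<Rightarrow> bool) \<Rightarrow> (nat \<Rightarrow> bool)) set" where
  "rational_group = {f. rational f}"

definition locally_agrees :: "((nat \<Rightarrow> bool) \<Rightarrow> (nat \<Rightarrow> bool)) \<Rightarrow> ((nat \<Rightarrow> bool) \<Rightarrow> (nat \<Rightarrow> bool)) set \<Rightarrow> bool" where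
  "locally_agrees h G \<longleftrightarrow> (\<forall>x. \<exists>U. openin cantor U \<and> x \<in> U \<and> (\<exists>g\<in>G. \<forall>y\<in>U. h y = g y))"

end

(*
  By compactness of Cantor space, the local agreements of h with rational maps can be taken on
  all cylinders of one fixed depth N, so on each of the finitely many cylinders [u] with |u| = N
  the map h is computed by some finite transducer. A single finite transducer then reads the
  first N letters silently, and once it knows u, outputs what the transducer for [u] would have
  produced on u and continues as that transducer. Its states are pairs, which are finally
  re-encoded as natural numbers.
*)
theory Submission
  imports Defs
begin

definition word_prefix :: "(nat \<Rightarrow> bool) \<Rightarrow> nat \<Rightarrow> bool list" where
  "word_prefix \<psi> n = map \<psi> [0..<n]"

definition cylinder :: "bool list \<Rightarrow> (nat \<Rightarrow> bool) set" where
  "cylinder u = {\<psi>. word_prefix \<psi> (length u) = u}"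

definition extend :: "bool list \<Rightarrow> nat \<Rightarrow> bool" where
  "extend u k \<longleftrightarrow> k < length u \<and> u ! k"

lemma length_word_prefix [simp]: "length (word_prefix \<psi> n) = n"
  by (simp add: word_prefix_def)

lemma word_prefix_0 [simp]: "word_prefix \<psi> 0 = []"
  by (simp add: word_prefix_def)

lemma word_prefix_Suc: "word_prefix \<psi> (Suc n) = word_prefix \<psi> n @ [\<psi> n]"
  by (simp add: word_prefix_def)

lemma word_prefix_eq_iff: "word_prefix \<psi> n = word_prefix \<phi> n \<longleftrightarrow> (\<forall>k<n. \<psi> k = \<phi> k)"
  by (auto simp: word_prefix_def)

lemma word_prefix_extend [simp]: "word_prefix (extend u) (length u) = u"
  by (rule nth_equalityI) (auto simp: word_prefix_def extend_def)

lemma mem_cylinder: "\<psi> \<in> cylinder u \<longleftrightarrow> (\<forall>k<length u. \<psi> k = u ! k)"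
  unfolding cylinder_def word_prefix_def list_eq_iff_nth_eq by auto

lemma mem_cylinder_word_prefix [simp]: "\<psi> \<in> cylinder (word_prefix \<phi> n) \<longleftrightarrow> word_prefix \<psi> n = word_prefix \<phi> n"
  by (simp add: cylinder_def)

lemma cylinder_word_prefix_mono: "m \<le> n \<Longrightarrow> cylinder (word_prefix \<psi> n) \<subseteq> cylinder (word_prefix \<psi> m)"
  by (auto simp: word_prefix_eq_iff)

lemma topspace_cantor [simp]: "topspace cantor = UNIV"
  by (simp add: cantor_def)

lemma compact_space_cantor: "compact_space cantor"
  unfolding cantor_def
  by (simp add: compact_space_product_topology compact_space_discrete_topology)

lemma openin_cantor_cylinder: "openin cantor (cylinder u)"
proof -
  let ?V = "\<lambda>k. if k < length u then {u ! k} else UNIV"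
  have "cylinder u = PiE UNIV ?V"
    by (auto simp: mem_cylinder PiE_iff if_split_mem2)
  moreover have "finite {k. ?V k \<noteq> UNIV}"
    by (rule finite_subset[of _ "{..<length u}"]) auto
  ultimately show ?thesis
    unfolding cantor_def by (simp add: openin_PiE_gen)
qed

lemma openin_cantor_contains_cylinder:
  assumes "openin cantor U" "\<psi> \<in> U"
  obtains n where "cylinder (word_prefix \<psi> n) \<subseteq> U"
proof -
  obtain V where V: "finite {k. V k \<noteq> UNIV}" "\<psi> \<in> PiE UNIV V" "PiE UNIV V \<subseteq> U"
    using assms unfolding cantor_def openin_product_topology_alt by fastforce
  obtain n where n: "{k. V k \<noteq> UNIV} \<subseteq> {..<n}"
    using finite_nat_bounded[OF V(1)] by blast
  have "cylinder (word_prefix \<psi> n) \<subseteq> PiE UNIV V"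
  proof
    fix \<phi> assume "\<phi> \<in> cylinder (word_prefix \<psi> n)"
    then have "\<phi> k \<in> V k" for k
    proof (cases "k < n")
      case True
      then show ?thesis
        using \<open>\<phi> \<in> cylinder (word_prefix \<psi> n)\<close> V(2) by (auto simp: word_prefix_eq_iff)
    qed (use n in auto)
    then show "\<phi> \<in> PiE UNIV V" by auto
  qed
  with V(3) show thesis using that by blast
qed

lemma locally_agrees_uniform_depth:
  assumes "locally_agrees h G"
  obtains N where "N > 0" "\<And>\<psi>. \<exists>g\<in>G. \<forall>\<phi>\<in>cylinder (word_prefix \<psi> N). h \<phi> = g \<phi>"
proof -
  have "\<exists>n. \<exists>g\<in>G. \<forall>\<phi>\<in>cylinder (word_prefix \<psi> n). h \<phi> = g \<phi>" for \<psi>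
  proof -
    obtain U g where "openin cantor U" "\<psi> \<in> U" "g \<in> G" "\<forall>\<phi>\<in>U. h \<phi> = g \<phi>"
      using assms unfolding locally_agrees_def by blast
    moreover obtain n where "cylinder (word_prefix \<psi> n) \<subseteq> U"
      using openin_cantor_contains_cylinder[OF \<open>openin cantor U\<close> \<open>\<psi> \<in> U\<close>] .
    ultimately show ?thesis
      by blast
  qed
  then obtain depth where depth: "\<And>\<psi>. \<exists>g\<in>G. \<forall>\<phi>\<in>cylinder (word_prefix \<psi> (depth \<psi>)). h \<phi> = g \<phi>"
    using choice[of "\<lambda>\<psi> n. \<exists>g\<in>G. \<forall>\<phi>\<in>cylinder (word_prefix \<psi> n). h \<phi> = g \<phi>"] by blast
  let ?C = "\<lambda>\<psi>. cylinder (word_prefix \<psi> (depth \<psi>))"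
  have "UNIV \<subseteq> \<Union>(range ?C)"
    by auto
  moreover have "compactin cantor UNIV"
    using compact_space_cantor by (simp add: compact_space_def)
  ultimately have "\<exists>\<F>. finite \<F> \<and> \<F> \<subseteq> range ?C \<and> UNIV \<subseteq> \<Union>\<F>"
    by (intro compactinD) (auto simp: openin_cantor_cylinder)
  then obtain \<F> where \<F>: "finite \<F>" "\<F> \<subseteq> range ?C" "UNIV \<subseteq> \<Union>\<F>"
    by blast
  obtain X where X: "finite X" "\<F> = ?C ` X"
    using finite_subset_image[OF \<F>(1,2)] by blast
  define N where "N = Suc (Max (insert 0 (depth ` X)))"
  have "\<exists>g\<in>G. \<forall>\<phi>\<in>cylinder (word_prefix \<psi> N). h \<phi> = g \<phi>" for \<psi>
  proof -
    obtain \<xi> where \<xi>: "\<xi> \<in> X" "\<psi> \<in> ?C \<xi>"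
      using \<F>(3) X(2) by blast
    have "depth \<xi> \<le> N"
      unfolding N_def using X(1) \<xi>(1) by (simp add: le_SucI)
    then have "cylinder (word_prefix \<psi> N) \<subseteq> ?C \<xi>"
      using \<xi>(2) cylinder_word_prefix_mono[of "depth \<xi>" N \<psi>] by auto
    then show ?thesis
      using depth[of \<xi>] by blast
  qed
  moreover have "N > 0"
    by (simp add: N_def)
  ultimately show thesis
    using that by blast
qed

text \<open>Copies of \<open>run\<close>, \<open>out_prefix\<close> and \<open>transduces\<close> for an arbitrary state type, so that
  transducers with structured states can be built before being encoded into \<open>nat\<close>.\<close>
primrec grun :: "('a \<Rightarrow> bool \<Rightarrow> 'a) \<Rightarrow> 'a \<Rightarrow> (nat \<Rightarrow> bool) \<Rightarrow> nat \<Rightarrow> 'a" where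
  "grun t s \<psi> 0 = s"
| "grun t s \<psi> (Suc n) = t (grun t s \<psi> n) (\<psi> n)"

definition gout_prefix :: "('a \<Rightarrow> bool \<Rightarrow> 'a) \<Rightarrow> ('a \<Rightarrow> bool \<Rightarrow> bool list) \<Rightarrow> 'a
    \<Rightarrow> (nat \<Rightarrow> bool) \<Rightarrow> nat \<Rightarrow> bool list" where
  "gout_prefix t out s \<psi> n = concat (map (\<lambda>k. out (grun t s \<psi> k) (\<psi> k)) [0..<n])"

definition gtransduces :: "('a \<Rightarrow> bool \<Rightarrow> 'a) \<Rightarrow> ('a \<Rightarrow> bool \<Rightarrow> bool list) \<Rightarrow> 'a
    \<Rightarrow> (nat \<Rightarrow> bool) \<Rightarrow> (nat \<Rightarrow> bool) \<Rightarrow> bool" where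
  "gtransduces t out s \<psi> w \<longleftrightarrow>
     (\<forall>n. \<forall>i < length (gout_prefix t out s \<psi> n). gout_prefix t out s \<psi> n ! i = w i) \<and>
     (\<forall>m. \<exists>n. m \<le> length (gout_prefix t out s \<psi> n))"

definition computes_on :: "'a set \<Rightarrow> 'a \<Rightarrow> ('a \<Rightarrow> bool \<Rightarrow> 'a) \<Rightarrow> ('a \<Rightarrow> bool \<Rightarrow> bool list)
    \<Rightarrow> (nat \<Rightarrow> bool) set \<Rightarrow> ((nat \<Rightarrow> bool) \<Rightarrow> (nat \<Rightarrow> bool)) \<Rightarrow> bool" where
  "computes_on S s0 t out A f \<longleftrightarrow> finite S \<and> s0 \<in> S \<and> (\<forall>s\<in>S. \<forall>b. t s b \<in> S) \<and>
     (\<forall>\<psi>\<in>A. gtransduces t out s0 \<psi> (f \<psi>))"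

lemma run_eq_grun: "run t s \<psi> n = grun t s \<psi> n"
  by (induction n) simp_all

lemma transduces_eq_gtransduces: "transduces = gtransduces"
  by (intro ext) (simp add: transduces_def gtransduces_def out_prefix_def gout_prefix_def run_eq_grun)

lemma rational_iff_computes_on:
  "rational f \<longleftrightarrow> homeomorphic_map cantor cantor f \<and>
     (\<exists>S (s0 :: nat) t out. computes_on S s0 t out UNIV f)"
  by (simp add: rational_def computes_on_def transduces_eq_gtransduces)

lemma computes_on_cong:
  "computes_on S s0 t out A g \<Longrightarrow> B \<subseteq> A \<Longrightarrow> (\<And>\<psi>. \<psi> \<in> B \<Longrightarrow> f \<psi> = g \<psi>)
    \<Longrightarrow> computes_on S s0 t out B f"
  by (auto simp: computes_on_def)

lemma grun_in: "s \<in> S \<Longrightarrow> \<forall>s\<in>S. \<forall>b. t s b \<in> S \<Longrightarrow> grun t s \<psi> n \<in> S"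
  by (induction n) auto

lemma grun_cong: "\<forall>k<n. \<psi> k = \<phi> k \<Longrightarrow> grun t s \<psi> n = grun t s \<phi> n"
  by (induction n) auto

lemma gout_prefix_Suc:
  "gout_prefix t out s \<psi> (Suc n) = gout_prefix t out s \<psi> n @ out (grun t s \<psi> n) (\<psi> n)"
  by (simp add: gout_prefix_def)

lemma gout_prefix_0 [simp]: "gout_prefix t out s \<psi> 0 = []"
  by (simp add: gout_prefix_def)

lemma gout_prefix_cong: "\<forall>k<n. \<psi> k = \<phi> k \<Longrightarrow> gout_prefix t out s \<psi> n = gout_prefix t out s \<phi> n"
proof (induction n)
  case (Suc n)
  have "grun t s \<psi> n = grun t s \<phi> n"
    using Suc.prems by (intro grun_cong) simp
  with Suc show ?case
    by (simp add: gout_prefix_Suc)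
qed simp

lemma length_gout_prefix_mono:
  "n \<le> m \<Longrightarrow> length (gout_prefix t out s \<psi> n) \<le> length (gout_prefix t out s \<psi> m)"
  by (induction m rule: dec_induct) (auto simp: gout_prefix_Suc)

lemma gtransduces_delayed:
  assumes silent: "\<And>n. n < N \<Longrightarrow> gout_prefix t out s \<psi> n = []"
    and catch_up: "\<And>n. N \<le> n \<Longrightarrow> gout_prefix t out s \<psi> n = gout_prefix t' out' s' \<psi> n"
    and "gtransduces t' out' s' \<psi> w"
  shows "gtransduces t out s \<psi> w"
  unfolding gtransduces_def
proof (intro conjI allI impI)
  fix n i assume "i < length (gout_prefix t out s \<psi> n)"
  with silent catch_up \<open>gtransduces t' out' s' \<psi> w\<close> show "gout_prefix t out s \<psi> n ! i = w i"
    unfolding gtransduces_def by (metis length_0_conv less_zeroE not_le)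
next
  fix m
  obtain n where "m \<le> length (gout_prefix t' out' s' \<psi> n)"
    using \<open>gtransduces t' out' s' \<psi> w\<close> unfolding gtransduces_def by blast
  then have "m \<le> length (gout_prefix t out s \<psi> (max n N))"
    using length_gout_prefix_mono[of n "max n N" t' out' s' \<psi>] catch_up[of "max n N"] by simp
  then show "\<exists>n. m \<le> length (gout_prefix t out s \<psi> n)" ..
qed

lemma computes_on_nat_states:
  fixes S :: "'a::countable set"
  assumes "computes_on S s0 t out A f"
  shows "\<exists>S' (s0' :: nat) t' out'. computes_on S' s0' t' out' A f"
proof -
  let ?t = "\<lambda>n b. to_nat (t (from_nat n) b)" and ?out = "\<lambda>n b. out (from_nat n) b"
  have "grun ?t (to_nat s) \<psi> n = to_nat (grun t s \<psi> n)" for s \<psi> n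
    by (induction n) simp_all
  then have "gout_prefix ?t ?out (to_nat s0) = gout_prefix t out s0"
    by (intro ext) (simp add: gout_prefix_def)
  then have "computes_on (to_nat ` S) (to_nat s0) ?t ?out A f"
    using assms by (auto simp: computes_on_def gtransduces_def)
  then show ?thesis by blast
qed

text \<open>State \<open>(u, s)\<close>: the word \<open>u\<close> read so far, up to length \<open>N\<close>, and then the state \<open>s\<close> of the
  transducer \<open>(tt u, ouf u, s0 u)\<close> in charge of \<open>cylinder u\<close>; while buffering, \<open>s\<close> is \<open>undefined\<close>.\<close>
definition buffer_trans :: "nat \<Rightarrow> (bool list \<Rightarrow> 'a \<Rightarrow> bool \<Rightarrow> 'a) \<Rightarrow> (bool list \<Rightarrow> 'a)
    \<Rightarrow> bool list \<times> 'a \<Rightarrow> bool \<Rightarrow> bool list \<times> 'a" where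
  "buffer_trans N tt s0 = (\<lambda>(u, s) b. if length u < N then
     (u @ [b], if Suc (length u) = N then grun (tt (u @ [b])) (s0 (u @ [b])) (extend (u @ [b])) N else s)
   else (u, tt u s b))"

definition buffer_out :: "nat \<Rightarrow> (bool list \<Rightarrow> 'a \<Rightarrow> bool \<Rightarrow> 'a) \<Rightarrow> (bool list \<Rightarrow> 'a \<Rightarrow> bool \<Rightarrow> bool list)
    \<Rightarrow> (bool list \<Rightarrow> 'a) \<Rightarrow> bool list \<times> 'a \<Rightarrow> bool \<Rightarrow> bool list" where
  "buffer_out N tt ouf s0 = (\<lambda>(u, s) b. if length u < N then
     (if Suc (length u) = N then gout_prefix (tt (u @ [b])) (ouf (u @ [b])) (s0 (u @ [b])) (extend (u @ [b])) N
      else [])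
   else ouf u s b)"

lemma buffer_before:
  assumes "n < N"
  shows "grun (buffer_trans N tt s0) ([], undefined) \<psi> n = (word_prefix \<psi> n, undefined)"
    and "gout_prefix (buffer_trans N tt s0) (buffer_out N tt ouf s0) ([], undefined) \<psi> n = []"
  using assms
  by (induction n) (auto simp: buffer_trans_def buffer_out_def word_prefix_Suc gout_prefix_Suc)

lemma buffer_after:
  fixes \<psi> :: "nat \<Rightarrow> bool"
  assumes "0 < N" "N \<le> n"
  defines "u \<equiv> word_prefix \<psi> N"
  shows "grun (buffer_trans N tt s0) ([], undefined) \<psi> n = (u, grun (tt u) (s0 u) \<psi> n)
    \<and> gout_prefix (buffer_trans N tt s0) (buffer_out N tt ouf s0) ([], undefined) \<psi> n
      = gout_prefix (tt u) (ouf u) (s0 u) \<psi> n"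
  using \<open>N \<le> n\<close>
proof (induction n rule: dec_induct)
  case base
  obtain m where m: "N = Suc m"
    using \<open>0 < N\<close> gr0_implies_Suc by blast
  have u: "word_prefix \<psi> m @ [\<psi> m] = u" "length (word_prefix \<psi> m) < N" "Suc (length (word_prefix \<psi> m)) = N"
    by (simp_all add: u_def m word_prefix_Suc)
  have "\<forall>k<N. extend u k = \<psi> k"
    using word_prefix_extend[of u] by (simp add: u_def word_prefix_eq_iff)
  then have "grun (tt u) (s0 u) (extend u) N = grun (tt u) (s0 u) \<psi> N"
    and "gout_prefix (tt u) (ouf u) (s0 u) (extend u) N = gout_prefix (tt u) (ouf u) (s0 u) \<psi> N"
    by (simp_all add: grun_cong gout_prefix_cong)
  moreover have "grun (buffer_trans N tt s0) ([], undefined) \<psi> N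
      = buffer_trans N tt s0 (word_prefix \<psi> m, undefined) (\<psi> m)"
    and "gout_prefix (buffer_trans N tt s0) (buffer_out N tt ouf s0) ([], undefined) \<psi> N
      = buffer_out N tt ouf s0 (word_prefix \<psi> m, undefined) (\<psi> m)"
    using buffer_before(1)[of m N tt s0 \<psi>] buffer_before(2)[of m N tt s0 ouf \<psi>]
    by (simp_all add: m gout_prefix_Suc)
  ultimately show ?case
    using u by (simp add: buffer_trans_def buffer_out_def)
next
  case (step n)
  moreover have "length u = N"
    by (simp add: u_def)
  ultimately show ?case
    by (simp add: buffer_trans_def buffer_out_def gout_prefix_Suc)
qed

lemma computes_on_cylinders:
  assumes "N > 0"
    and local: "\<And>u. length u = N \<Longrightarrow> \<exists>S (s0 :: 'a) t out. computes_on S s0 t out (cylinder u) f"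
  shows "\<exists>S (s0 :: bool list \<times> 'a) t out. computes_on S s0 t out UNIV f"
proof -
  obtain SS and s0 :: "bool list \<Rightarrow> 'a" and tt ouf
    where local: "\<And>u. length u = N \<Longrightarrow> computes_on (SS u) (s0 u) (tt u) (ouf u) (cylinder u) f"
    using local by metis
  define S where "S = (\<lambda>u. (u, undefined)) ` {u. length u < N} \<union> (SIGMA u:{u. length u = N}. SS u)"
  have "finite {u :: bool list. length u \<le> N}"
    using finite_lists_length_le[of "UNIV :: bool set" N] by simp
  then have "finite {u :: bool list. length u < N}" "finite {u :: bool list. length u = N}"
    by (auto elim: rev_finite_subset)
  then have "finite S"
    unfolding S_def using local by (intro finite_UnI finite_imageI finite_SigmaI) (auto simp: computes_on_def)
  moreover have "([], undefined) \<in> S"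
    using \<open>N > 0\<close> by (simp add: S_def)
  moreover have "buffer_trans N tt s0 x b \<in> S" if "x \<in> S" for x b
    using that local[of "fst x @ [b]"] local[of "fst x"]
    by (auto simp: S_def buffer_trans_def computes_on_def intro!: grun_in)
  moreover have "gtransduces (buffer_trans N tt s0) (buffer_out N tt ouf s0) ([], undefined) \<psi> (f \<psi>)" for \<psi>
  proof -
    let ?u = "word_prefix \<psi> N"
    have "gtransduces (tt ?u) (ouf ?u) (s0 ?u) \<psi> (f \<psi>)"
      using local[of ?u] by (simp add: computes_on_def cylinder_def)
    then show ?thesis
      by (rule gtransduces_delayed[where N = N, rotated 2]) (simp_all add: buffer_before buffer_after \<open>N > 0\<close>)
  qed
  ultimately show ?thesis
    unfolding computes_on_def by blast
qed

theorem proposition2p3: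
  assumes "homeomorphic_map cantor cantor h"
    and "locally_agrees h rational_group"
  shows "h \<in> rational_group"
proof -
  obtain N where "N > 0" and uniform: "\<And>\<psi>. \<exists>g\<in>rational_group. \<forall>\<phi>\<in>cylinder (word_prefix \<psi> N). h \<phi> = g \<phi>"
    using locally_agrees_uniform_depth[OF assms(2)] by blast
  have "\<exists>S (s0 :: nat) t out. computes_on S s0 t out (cylinder u) h" if "length u = N" for u
  proof -
    obtain g where "rational g" and agree: "\<forall>\<phi>\<in>cylinder u. h \<phi> = g \<phi>"
      using uniform[of "extend u"] \<open>length u = N\<close> by (auto simp: rational_group_def)
    then obtain S s0 t out where "computes_on S (s0 :: nat) t out UNIV g"
      by (auto simp: rational_iff_computes_on)
    then show ?thesis
      using agree by (blast intro: computes_on_cong)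
  qed
  then obtain S s0 t out where "computes_on S (s0 :: bool list \<times> nat) t out UNIV h"
    using computes_on_cylinders[OF \<open>N > 0\<close>] by blast
  then have "rational h"
    using assms(1) computes_on_nat_states by (auto simp: rational_iff_computes_on)
  then show ?thesis
    by (simp add: rational_group_def)
qed

end
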